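(* For integers $n\geq 3$ and $m\geq 1$, $$\chi_\rho(FSSD_m(S'(C_n))) = \begin{cases} 3, & n \text{ even},\\ 5, & n\text{ odd}.\end{cases}$$
   Context: All graphs are finite and simple. For a positive integer $i$, an $i$-packing in a graph is a set of vertices any two distinct members of which are at distance greater than $i$. The packing chromatic number $\chi_\rho(H)$ is the smallest $k$ such that $V(H)$ can be partitioned into sets $V_1,\dots,V_k$ with each $V_i$ an $i$-packing. For a positive integer $m$, $FSSD_m(G)$ is obtained from $G$ by replacing each edge $xy$ by a copy of $K_{2,m}$: the edge $xy$ is deleted and $m$ new vertices are added, each adjacent to exactly $x$ and $y$. The splitting graph $S'(G)$ of a graph $G$ with vertices $w_1,\dots,w_n$ is obtained from $G$ by adding new vertices $w_1',\dots,w_n'$, where each $w_i'$ is joined to every neighbor of $w_i$ in $G$ (equivalently, the neighborhood corona $G\star K_1$). $C_n$ is the cycle on $n$ vertices. *)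

theory Defs
  imports Main "HOL-Library.Extended_Nat"
begin

text \<open>A finite simple graph is represented by a vertex set and a symmetric,
irreflexive adjacency relation (restricted to the vertex set).\<close>
type_synonym 'a graph = "'a set \<times> ('a \<Rightarrow> 'a \<Rightarrow> bool)"

definition verts :: "'a graph \<Rightarrow> 'a set" where "verts G = fst G"
definition adj :: "'a graph \<Rightarrow> 'a \<Rightarrow> 'a \<Rightarrow> bool" where "adj G = snd G"

definition walk_len :: "'a graph \<Rightarrow> nat \<Rightarrow> 'a \<Rightarrow> 'a \<Rightarrow> bool" where
  "walk_len G k x y \<longleftrightarrow> (\<exists>p. length p = Suc k \<and> hd p = x \<and> last p = y \<and>
      set p \<subseteq> verts G \<and> (\<forall>i<k. adj G (p ! i) (p ! Suc i)))"

text \<open>Graph distance (\<infinity> if no walk exists).\<close>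
definition gdist :: "'a graph \<Rightarrow> 'a \<Rightarrow> 'a \<Rightarrow> enat" where
  "gdist G x y = (INF k \<in> {k. walk_len G k x y}. enat k)"

definition packing :: "'a graph \<Rightarrow> nat \<Rightarrow> 'a set \<Rightarrow> bool" where
  "packing G i S \<longleftrightarrow> S \<subseteq> verts G \<and>
     (\<forall>u\<in>S. \<forall>v\<in>S. u \<noteq> v \<longrightarrow> gdist G u v > enat i)"

definition packing_colouring :: "'a graph \<Rightarrow> nat \<Rightarrow> ('a \<Rightarrow> nat) \<Rightarrow> bool" where
  "packing_colouring G k c \<longleftrightarrow> (\<forall>v\<in>verts G. c v \<in> {1..k}) \<and>
     (\<forall>i\<in>{1..k}. packing G i {v\<in>verts G. c v = i})"

definition packing_chromatic :: "'a graph \<Rightarrow> nat" where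
  "packing_chromatic G = (LEAST k. \<exists>c. packing_colouring G k c)"

definition cycle_graph :: "nat \<Rightarrow> nat graph" where
  "cycle_graph n = ({0..<n}, \<lambda>i j. i < n \<and> j < n \<and> (j = Suc i mod n \<or> i = Suc j mod n))"

text \<open>Splitting graph S'(G): (v,False) are the original vertices, (v,True) the copies v'.
 v' is joined to every neighbour of v.\<close>
definition splitting_graph :: "'a graph \<Rightarrow> ('a \<times> bool) graph" where
  "splitting_graph G = (verts G \<times> UNIV,
     \<lambda>(u,a) (v,b). u \<in> verts G \<and> v \<in> verts G \<and> adj G u v \<and> \<not> (a \<and> b))"

datatype 'a subdiv = Orig 'a | Sub "'a set" nat

text \<open>FSSD_m(G): each edge xy is replaced by m new vertices Sub {x,y} j (j < m),
 each adjacent exactly to x and y.\<close>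
definition fssd :: "nat \<Rightarrow> 'a graph \<Rightarrow> 'a subdiv graph" where
  "fssd m G = (
     let V = Orig ` verts G \<union>
             {Sub {x,y} j | x y j. x \<in> verts G \<and> y \<in> verts G \<and> adj G x y \<and> j < m}
     in (V, \<lambda>a b. a \<in> V \<and> b \<in> V \<and>
          ((\<exists>x e j. a = Orig x \<and> b = Sub e j \<and> x \<in> e) \<or>
           (\<exists>x e j. b = Orig x \<and> a = Sub e j \<and> x \<in> e))))"

end

theory Submission
  imports Defs
begin

text \<open>Subdivision vertices are pairwise at distance at least 2, and two original vertices
  are at distance \<open>2 d\<close> where \<open>d\<close> is their distance in \<open>S'(C\<^sub>n)\<close>. So colour 1 on the
  subdivision vertices and colours 2, 3 alternating along the cycle suffice for even \<open>n\<close>; for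
  odd \<open>n\<close> the last vertex and its copy get the private colours 4 and 5.

  Conversely, with at most four colours an original vertex \<open>v\<^sub>j\<close> cannot get colour 1, since
  its four subdivision neighbours are pairwise at distance 2. Hence the cycle
  \<open>v\<^sub>0 \<dots> v\<^sub>n\<^sub>-\<^sub>1\<close> is coloured from \<open>{2, 3, 4}\<close> with consecutive colours distinct, which
  needs three colours. Moreover both cycle neighbours of a vertex of colour 4 get the same
  colour, so replacing each 4 by the colour not used next to it yields a proper
  2-colouring of the odd cycle \<open>C\<^sub>n\<close> when \<open>n\<close> is odd, which is impossible.\<close>

lemma walk_len_0_iff: "walk_len G 0 x y \<longleftrightarrow> x = y \<and> x \<in> verts G"
proof
  assume "walk_len G 0 x y"
  then obtain p where p: "length p = 1" "hd p = x" "last p = y" "set p \<subseteq> verts G"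
    unfolding walk_len_def by auto
  then obtain a where "p = [a]" by (metis One_nat_def length_0_conv length_Suc_conv)
  then show "x = y \<and> x \<in> verts G" using p by auto
next
  assume "x = y \<and> x \<in> verts G"
  then show "walk_len G 0 x y" unfolding walk_len_def by (intro exI[of _ "[x]"]) auto
qed

lemma walk_len_Suc_iff:
  "walk_len G (Suc k) x y \<longleftrightarrow> x \<in> verts G \<and> (\<exists>z. adj G x z \<and> walk_len G k z y)"
proof
  assume "walk_len G (Suc k) x y"
  then obtain p where p: "length p = Suc (Suc k)" "hd p = x" "last p = y" "set p \<subseteq> verts G"
    "\<forall>i<Suc k. adj G (p ! i) (p ! Suc i)"
    unfolding walk_len_def by auto
  then obtain q where q: "p = x # q" by (cases p) auto
  with p(1) have "q \<noteq> []" by auto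
  have "walk_len G k (hd q) y"
    unfolding walk_len_def
  proof (intro exI[of _ q] conjI allI impI)
    fix i assume "i < k"
    then show "adj G (q ! i) (q ! Suc i)" using p(5) q by force
  qed (use p q \<open>q \<noteq> []\<close> in auto)
  moreover have "adj G x (hd q)"
    using p(5)[rule_format, of 0] q by (simp add: hd_conv_nth[OF \<open>q \<noteq> []\<close>])
  ultimately show "x \<in> verts G \<and> (\<exists>z. adj G x z \<and> walk_len G k z y)" using p q by auto
next
  assume "x \<in> verts G \<and> (\<exists>z. adj G x z \<and> walk_len G k z y)"
  then obtain z q where x: "x \<in> verts G" and xz: "adj G x z"
    and q: "length q = Suc k" "hd q = z" "last q = y" "set q \<subseteq> verts G"
      "\<forall>i<k. adj G (q ! i) (q ! Suc i)"
    unfolding walk_len_def by auto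
  from q(1) have "q \<noteq> []" by auto
  show "walk_len G (Suc k) x y"
    unfolding walk_len_def
  proof (intro exI[of _ "x # q"] conjI allI impI)
    fix i assume "i < Suc k"
    then show "adj G ((x # q) ! i) ((x # q) ! Suc i)"
      using xz q by (cases i) (auto simp: hd_conv_nth[OF \<open>q \<noteq> []\<close>])
  qed (use q x in auto)
qed

lemma walk_len_path:
  assumes "set p \<subseteq> verts G" "successively (adj G) p" "p \<noteq> []"
  shows "walk_len G (length p - 1) (hd p) (last p)"
  using assms
proof (induction p rule: induct_list012)
  case (3 x y zs)
  then show ?case by (auto simp: walk_len_Suc_iff)
qed (auto simp: walk_len_0_iff)

lemma gdist_le_walk_len: "walk_len G k x y \<Longrightarrow> gdist G x y \<le> enat k"
  unfolding gdist_def by (rule INF_lower) auto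

lemma enat_less_gdist_if_no_short_walk:
  assumes "\<And>j. walk_len G j x y \<Longrightarrow> k < j"
  shows "enat k < gdist G x y"
proof -
  have "enat (Suc k) \<le> gdist G x y"
    unfolding gdist_def by (rule INF_greatest) (auto dest: assms simp: Suc_le_eq)
  then show ?thesis by (metis Suc_ile_eq order_le_less)
qed

lemma packing_colouring_less_gdist:
  assumes "packing_colouring G K c" "u \<in> verts G" "v \<in> verts G" "u \<noteq> v" "c u = c v"
  shows "enat (c u) < gdist G u v"
  using assms unfolding packing_colouring_def packing_def by auto

lemma packing_colouring_less_path_length:
  assumes "packing_colouring G K c" "set p \<subseteq> verts G" "successively (adj G) p" "p \<noteq> []"
    and "hd p \<noteq> last p" "c (hd p) = c (last p)"
  shows "c (hd p) < length p - 1"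
proof -
  have "enat (c (hd p)) < gdist G (hd p) (last p)"
    using assms by (intro packing_colouring_less_gdist) auto
  also have "\<dots> \<le> enat (length p - 1)"
    using assms by (intro gdist_le_walk_len walk_len_path)
  finally show ?thesis by simp
qed

text \<open>The neighbours of a vertex of colour 1 are pairwise at distance at most 2, so they
  receive pairwise distinct colours from \<open>{2..K}\<close>.\<close>
lemma card_neighbours_less_if_colour_1:
  assumes pc: "packing_colouring G K c" and x: "x \<in> verts G" "c x = 1"
    and N: "finite N" "N \<subseteq> verts G" "x \<notin> N" "\<forall>s\<in>N. adj G s x \<and> adj G x s"
  shows "card N < K"
proof -
  have colour: "c v \<in> {1..K}" if "v \<in> verts G" for v
    using pc that unfolding packing_colouring_def by auto
  have ge_2: "c s \<in> {2..K}" if s: "s \<in> N" for s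
  proof -
    have "s \<in> verts G" "x \<noteq> s" using N s by auto
    then have "c s \<noteq> 1"
      using packing_colouring_less_path_length[OF pc, of "[x, s]"] x N s by auto
    then show ?thesis using colour[of s] N s by auto
  qed
  have "inj_on c N"
  proof (rule inj_onI)
    fix s t assume st: "s \<in> N" "t \<in> N" "c s = c t"
    show "s = t"
      using packing_colouring_less_path_length[OF pc, of "[s, x, t]"] ge_2[of s] x N st by force
  qed
  then have "card N = card (c ` N)" by (simp add: card_image)
  also have "\<dots> \<le> card {2..K}" using ge_2 by (intro card_mono) auto
  also have "\<dots> < K" using colour[OF x(1)] by auto
  finally show ?thesis .
qed

lemma verts_fssd: "verts (fssd m G) = Orig ` verts G \<union>
    {Sub {x,y} j | x y j. x \<in> verts G \<and> y \<in> verts G \<and> adj G x y \<and> j < m}"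
  unfolding fssd_def verts_def Let_def by simp

lemma adj_fssd: "adj (fssd m G) a b \<longleftrightarrow> a \<in> verts (fssd m G) \<and> b \<in> verts (fssd m G) \<and>
    ((\<exists>x e j. a = Orig x \<and> b = Sub e j \<and> x \<in> e) \<or> (\<exists>x e j. b = Orig x \<and> a = Sub e j \<and> x \<in> e))"
  unfolding verts_fssd unfolding fssd_def verts_def adj_def Let_def by simp

lemma adj_fssd_imp_verts: "adj (fssd m G) a b \<Longrightarrow> a \<in> verts (fssd m G) \<and> b \<in> verts (fssd m G)"
  by (simp add: adj_fssd)

lemma adj_fssd_subdivision:
  assumes "adj G x y" "x \<in> verts G" "y \<in> verts G" "j < m"
  shows "adj (fssd m G) (Orig x) (Sub {x,y} j)" "adj (fssd m G) (Sub {x,y} j) (Orig x)"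
    "adj (fssd m G) (Orig y) (Sub {x,y} j)" "adj (fssd m G) (Sub {x,y} j) (Orig y)"
  using assms unfolding adj_fssd verts_fssd by blast+

lemma set_subset_verts_fssd:
  "successively (adj (fssd m G)) p \<Longrightarrow> length p \<noteq> 1 \<Longrightarrow> set p \<subseteq> verts (fssd m G)"
proof (induction p rule: induct_list012)
  case (3 x y zs)
  then show ?case using adj_fssd_imp_verts[of m G x y] by (cases zs) auto
qed simp_all

lemma walk_len_fssd_Orig_Orig:
  assumes walk: "walk_len (fssd m G) k (Orig x) (Orig y)" and "k \<le> 3"
  shows "x = y \<or> adj G x y \<or> adj G y x"
proof -
  consider "k = 0" | "k = 1" | "k = 2" | "k = 3" using \<open>k \<le> 3\<close> by linarith
  then show ?thesis
  proof cases
    case 3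
    then obtain z where "adj (fssd m G) (Orig x) z" "adj (fssd m G) z (Orig y)"
      using walk by (auto simp: walk_len_Suc_iff walk_len_0_iff numeral_eq_Suc)
    then obtain e i where "z = Sub e i" "x \<in> e" "y \<in> e" "z \<in> verts (fssd m G)"
      by (auto simp: adj_fssd)
    then show ?thesis by (auto simp: verts_fssd)
  qed (use walk in \<open>auto simp: walk_len_Suc_iff walk_len_0_iff numeral_eq_Suc adj_fssd\<close>)
qed

lemma enat_3_less_gdist_fssd_Orig:
  assumes "x \<noteq> y" "\<not> adj G x y" "\<not> adj G y x"
  shows "enat 3 < gdist (fssd m G) (Orig x) (Orig y)"
proof (rule enat_less_gdist_if_no_short_walk)
  fix k assume "walk_len (fssd m G) k (Orig x) (Orig y)"
  then show "3 < k" using walk_len_fssd_Orig_Orig assms by (meson not_le)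
qed

lemma enat_1_less_gdist_fssd_Sub:
  assumes "Sub e i \<noteq> Sub e' i'"
  shows "enat 1 < gdist (fssd m G) (Sub e i) (Sub e' i')"
proof (rule enat_less_gdist_if_no_short_walk)
  fix k assume "walk_len (fssd m G) k (Sub e i) (Sub e' i')"
  moreover have "\<not> walk_len (fssd m G) 0 (Sub e i) (Sub e' i')"
    "\<not> walk_len (fssd m G) 1 (Sub e i) (Sub e' i')"
    using assms by (auto simp: walk_len_Suc_iff walk_len_0_iff adj_fssd)
  ultimately show "1 < k" by (metis less_one linorder_neqE_nat)
qed

text \<open>Two original vertices of \<open>FSSD\<^sub>m(G)\<close> are at distance \<open>2 d\<^sub>G\<close>, and the subdivision
  vertices form a 1-packing.\<close>
lemma packing_colouring_fssd:
  assumes sub: "\<And>e j. col (Sub e j) = 1"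
    and orig: "\<And>x. x \<in> verts G \<Longrightarrow> col (Orig x) \<in> {2..K}"
    and same: "\<And>x y. \<lbrakk>x \<in> verts G; y \<in> verts G; x \<noteq> y; col (Orig x) = col (Orig y)\<rbrakk>
                 \<Longrightarrow> col (Orig x) \<le> 3 \<and> \<not> adj G x y"
  shows "packing_colouring (fssd m G) K col"
  unfolding packing_colouring_def packing_def
proof (intro conjI ballI impI)
  fix v assume "v \<in> verts (fssd m G)"
  then show "col v \<in> {1..K}"
    using sub orig by (fastforce simp: verts_fssd)
next
  fix i u v assume "i \<in> {1..K}" and u: "u \<in> {v \<in> verts (fssd m G). col v = i}"
    and v: "v \<in> {v \<in> verts (fssd m G). col v = i}" and "u \<noteq> v"
  show "enat i < gdist (fssd m G) u v"
  proof (cases u; cases v)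
    fix x y assume "u = Orig x" "v = Orig y"
    then have "x \<in> verts G" "y \<in> verts G" "x \<noteq> y" "col (Orig x) = col (Orig y)"
      using u v \<open>u \<noteq> v\<close> by (auto simp: verts_fssd)
    then have "i \<le> 3" "\<not> adj G x y" "\<not> adj G y x"
      using same[of x y] same[of y x] u \<open>u = Orig x\<close> by auto
    then show ?thesis
      using enat_3_less_gdist_fssd_Orig[of x y G m] \<open>x \<noteq> y\<close> \<open>u = Orig x\<close> \<open>v = Orig y\<close>
      by (meson enat_ord_simps(1) le_less_trans)
  next
    fix e j e' j' assume "u = Sub e j" "v = Sub e' j'"
    then show ?thesis
      using enat_1_less_gdist_fssd_Sub[of e j e' j' m G] u sub \<open>u \<noteq> v\<close> by auto
  qed (use u v sub orig in \<open>fastforce simp: verts_fssd\<close>)+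
qed auto

lemma verts_splitting_graph: "verts (splitting_graph G) = verts G \<times> UNIV"
  unfolding splitting_graph_def verts_def by simp

lemma adj_splitting_graph:
  "adj (splitting_graph G) (u, a) (v, b) \<longleftrightarrow> u \<in> verts G \<and> v \<in> verts G \<and> adj G u v \<and> \<not> (a \<and> b)"
  unfolding splitting_graph_def verts_def adj_def by simp

lemma verts_cycle_graph: "verts (cycle_graph n) = {0..<n}"
  unfolding cycle_graph_def verts_def by simp

lemma adj_cycle_graph:
  "adj (cycle_graph n) i j \<longleftrightarrow> i < n \<and> j < n \<and> (j = Suc i mod n \<or> i = Suc j mod n)"
  unfolding cycle_graph_def adj_def by simp

lemma Suc_mod_neq_self: "3 \<le> n \<Longrightarrow> i < n \<Longrightarrow> Suc i mod n \<noteq> i"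
  by (cases "Suc i = n") auto

lemma Suc_Suc_mod_neq_self: "3 \<le> n \<Longrightarrow> i < n \<Longrightarrow> Suc (Suc i mod n) mod n \<noteq> i"
  by (cases "Suc i = n"; cases "Suc (Suc i) = n") auto

lemma ex_Suc_mod_eq: "j < n \<Longrightarrow> \<exists>i<n. j = Suc i mod n"
  by (cases j) (auto intro: exI[of _ "n - 1"] exI[of _ "j - 1"])

lemma even_Suc_mod_iff:
  assumes "i < n" "even n \<or> i \<noteq> n - 1"
  shows "even (Suc i mod n) \<longleftrightarrow> odd i"
  using assms by (cases "Suc i = n") auto

definition splitting_cycle_colouring :: "nat \<Rightarrow> (nat \<times> bool) subdiv \<Rightarrow> nat" where
  "splitting_cycle_colouring n v = (case v of
     Sub _ _ \<Rightarrow> 1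
   | Orig (i, b) \<Rightarrow> if odd n \<and> i = n - 1 then (if b then 5 else 4) else if even i then 2 else 3)"

lemma packing_colouring_splitting_cycle:
  "packing_colouring (fssd m (splitting_graph (cycle_graph n))) (if even n then 3 else 5)
     (splitting_cycle_colouring n)"
proof (rule packing_colouring_fssd)
  fix x y assume "x \<in> verts (splitting_graph (cycle_graph n))" "y \<in> verts (splitting_graph (cycle_graph n))"
    and "x \<noteq> y" "splitting_cycle_colouring n (Orig x) = splitting_cycle_colouring n (Orig y)"
  moreover obtain u a v b where xy: "x = (u, a)" "y = (v, b)" by fastforce
  ultimately have uv: "u < n" "v < n" "even n \<or> u \<noteq> n - 1" "even n \<or> v \<noteq> n - 1" "even u \<longleftrightarrow> even v"
    by (auto simp: splitting_cycle_colouring_def verts_splitting_graph verts_cycle_graph split: if_splits)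
  then have "\<not> adj (splitting_graph (cycle_graph n)) x y"
    using even_Suc_mod_iff[of u n] even_Suc_mod_iff[of v n]
    by (auto simp: xy adj_splitting_graph adj_cycle_graph)
  then show "splitting_cycle_colouring n (Orig x) \<le> 3 \<and> \<not> adj (splitting_graph (cycle_graph n)) x y"
    using uv by (auto simp: xy splitting_cycle_colouring_def)
qed (auto simp: splitting_cycle_colouring_def)

lemma even_if_alternating_mod:
  fixes p :: "nat \<Rightarrow> bool"
  assumes "0 < n" and alt: "\<And>i. i < n \<Longrightarrow> p (Suc i mod n) \<noteq> p i"
  shows "even n"
proof -
  have parity: "p i = (p 0 \<longleftrightarrow> even i)" if "i < n" for i
    using that
  proof (induction i)
    case (Suc i)
    then show ?case using alt[of i] by auto
  qed simp
  have "p 0 \<noteq> p (n - 1)" using alt[of "n - 1"] \<open>0 < n\<close> by simp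
  then show ?thesis using parity[of "n - 1"] \<open>0 < n\<close> by auto
qed

text \<open>Reading each 4 as the colour of \<open>{2, 3}\<close> not taken by its successor turns such a
  colour sequence into an alternating 2-colouring of the cycle.\<close>
lemma even_if_cyclic_colours_2_3_4:
  fixes f :: "nat \<Rightarrow> nat"
  assumes "0 < n" and range: "\<And>i. i < n \<Longrightarrow> f i \<in> {2..4}"
    and step: "\<And>i. i < n \<Longrightarrow> f (Suc i mod n) \<noteq> f i"
    and four: "\<And>i. i < n \<Longrightarrow> f (Suc i mod n) = 4 \<Longrightarrow> f i = f (Suc (Suc i mod n) mod n)"
  shows "even n"
proof (rule even_if_alternating_mod[OF \<open>0 < n\<close>])
  define p where "p i \<longleftrightarrow> (if f i = 4 then f (Suc i mod n) = 2 else f i = 3)" for i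
  have flip: "(if b = 4 then d = 2 else b = 3) \<noteq> (if a = 4 then b = 2 else a = 3)"
    if "a \<in> {2..4}" "b \<in> {2..4}" "d \<in> {2..4}" "b \<noteq> a" "d \<noteq> b" "b = 4 \<Longrightarrow> a = d"
    for a b d :: nat
    using that by (auto simp: atLeastAtMost_iff le_Suc_eq eval_nat_numeral)
  fix i assume i: "i < n"
  then have j: "Suc i mod n < n" and k: "Suc (Suc i mod n) mod n < n" by simp_all
  show "p (Suc i mod n) \<noteq> p i"
    unfolding p_def
    by (rule flip[OF range[OF i] range[OF j] range[OF k] step[OF i] step[OF j] four[OF i]])
qed

context
  fixes n m K :: nat and c :: "(nat \<times> bool) subdiv \<Rightarrow> nat"
  assumes n: "3 \<le> n" and m: "1 \<le> m"
    and pc: "packing_colouring (fssd m (splitting_graph (cycle_graph n))) K c" and K: "K \<le> 4"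
begin

private abbreviation H where "H \<equiv> fssd m (splitting_graph (cycle_graph n))"

lemma colour_range: "v \<in> verts H \<Longrightarrow> c v \<in> {1..K}"
  using pc unfolding packing_colouring_def by blast

lemma colour_less_path:
  assumes "successively (adj H) p" "p \<noteq> []" "hd p \<noteq> last p" "c (hd p) = c (last p)"
  shows "c (hd p) < length p - 1"
proof -
  have "length p \<noteq> 1" using assms(2,3) by (auto simp: length_Suc_conv)
  then show ?thesis
    using assms by (intro packing_colouring_less_path_length[OF pc] set_subset_verts_fssd)
qed

lemma adj_H_subdivision:
  assumes "i < n" "\<not> (a \<and> b)"
  defines "s \<equiv> Sub {(i, a), (Suc i mod n, b)} 0"
  shows "adj H (Orig (i, a)) s" "adj H s (Orig (i, a))"
    "adj H (Orig (Suc i mod n, b)) s" "adj H s (Orig (Suc i mod n, b))"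
  using adj_fssd_subdivision[of "splitting_graph (cycle_graph n)" "(i, a)" "(Suc i mod n, b)" 0 m]
    assms m by (auto simp: adj_splitting_graph adj_cycle_graph verts_splitting_graph verts_cycle_graph)

text \<open>The four subdivision neighbours of an original vertex \<open>v\<^sub>j\<close> lie on the edges
  to \<open>v\<^sub>i, v\<^sub>i', v\<^sub>k, v\<^sub>k'\<close>, where \<open>i, k\<close> are the cycle neighbours of \<open>j\<close>.\<close>
lemma colour_Orig_neq_1:
  assumes j: "j < n"
  shows "c (Orig (j, False)) \<noteq> 1"
proof
  assume c1: "c (Orig (j, False)) = 1"
  obtain i where i: "i < n" and ji: "j = Suc i mod n" using ex_Suc_mod_eq[OF j] by blast
  define k where "k = Suc j mod n"
  have "i \<noteq> j" "i \<noteq> k" "j \<noteq> k"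
    using Suc_mod_neq_self[OF n i] Suc_Suc_mod_neq_self[OF n i] Suc_mod_neq_self[OF n j]
    by (simp_all add: ji k_def)
  define N where "N = {Sub {(i, False), (j, False)} 0, Sub {(i, True), (j, False)} 0,
    Sub {(j, False), (k, False)} 0, Sub {(j, False), (k, True)} 0}"
  have card_N: "card N = 4"
    using \<open>i \<noteq> j\<close> \<open>i \<noteq> k\<close> \<open>j \<noteq> k\<close> by (simp add: N_def doubleton_eq_iff)
  have adj_N: "\<forall>s\<in>N. adj H s (Orig (j, False)) \<and> adj H (Orig (j, False)) s"
    using adj_H_subdivision[OF i, of False False] adj_H_subdivision[OF i, of True False]
      adj_H_subdivision[OF j, of False False] adj_H_subdivision[OF j, of False True]
    by (simp add: N_def ji k_def)
  then have "Orig (j, False) \<in> verts H" "N \<subseteq> verts H"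
    using adj_fssd_imp_verts unfolding N_def by blast+
  then have "card N < K"
    using card_neighbours_less_if_colour_1[OF pc _ c1] adj_N by (auto simp: N_def)
  then show False using card_N K by simp
qed

lemma colour_Orig_range: "i < n \<Longrightarrow> c (Orig (i, False)) \<in> {2..K}"
  using colour_Orig_neq_1[of i] colour_range[of "Orig (i, False)"]
  by (fastforce simp: verts_fssd verts_splitting_graph verts_cycle_graph)

lemma colour_Orig_Suc_neq:
  assumes i: "i < n"
  shows "c (Orig (Suc i mod n, False)) \<noteq> c (Orig (i, False))"
proof
  assume "c (Orig (Suc i mod n, False)) = c (Orig (i, False))"
  then have "c (Orig (i, False)) < 2"
    using colour_less_path[of "[Orig (i, False), Sub {(i, False), (Suc i mod n, False)} 0,
        Orig (Suc i mod n, False)]"] adj_H_subdivision[OF i, of False False] Suc_mod_neq_self[OF n i]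
    by auto
  then show False using colour_Orig_range[OF i] by simp
qed

text \<open>The copy \<open>v\<^sub>j'\<close> of a vertex \<open>v\<^sub>j\<close> of colour 4 is at distance 2 from \<open>v\<^sub>i\<close> and \<open>v\<^sub>k\<close>
  and at distance 4 from \<open>v\<^sub>j\<close>, so it gets colour 1; then its two subdivision neighbours
  towards \<open>v\<^sub>i\<close> and \<open>v\<^sub>k\<close> need the colours 2 and 3, which collide with \<open>v\<^sub>i\<close> or \<open>v\<^sub>k\<close>
  unless these have the same colour.\<close>
lemma colour_Orig_neighbours_of_4:
  assumes i: "i < n" and four: "c (Orig (Suc i mod n, False)) = 4"
  shows "c (Orig (i, False)) = c (Orig (Suc (Suc i mod n) mod n, False))"
proof (rule ccontr)
  define j where "j = Suc i mod n"
  define k where "k = Suc j mod n"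
  have j: "j < n" and k: "k < n" using i n by (simp_all add: j_def k_def)
  have "i \<noteq> j" "i \<noteq> k" "j \<noteq> k"
    using Suc_mod_neq_self[OF n i] Suc_Suc_mod_neq_self[OF n i] Suc_mod_neq_self[OF n j]
    by (simp_all add: j_def k_def)
  define ui where "ui = Orig (i, False)"
  define uj where "uj = Orig (j, False)"
  define uk where "uk = Orig (k, False)"
  define vj where "vj = Orig (j, True)"
  define a where "a = Sub {(i, False), (j, False)} 0"
  define b where "b = Sub {(j, False), (k, False)} 0"
  define s where "s = Sub {(i, False), (j, True)} 0"
  define t where "t = Sub {(j, True), (k, False)} 0"
  note defs = ui_def uj_def uk_def vj_def a_def b_def s_def t_def
  have adj: "adj H ui a" "adj H a ui" "adj H uj a" "adj H a uj"
    "adj H uj b" "adj H b uj" "adj H uk b" "adj H b uk"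
    "adj H ui s" "adj H s ui" "adj H vj s" "adj H s vj"
    "adj H vj t" "adj H t vj" "adj H uk t" "adj H t uk"
    using adj_H_subdivision[OF i, of False False] adj_H_subdivision[OF j, of False False]
      adj_H_subdivision[OF i, of False True] adj_H_subdivision[OF j, of True False]
    by (simp_all add: defs j_def[symmetric] k_def[symmetric])
  have verts: "ui \<in> verts H" "uk \<in> verts H" "vj \<in> verts H" "s \<in> verts H" "t \<in> verts H"
    using adj adj_fssd_imp_verts by blast+
  have apart: "c (hd p) \<noteq> c (last p)"
    if "successively (adj H) p" "p \<noteq> []" "hd p \<noteq> last p" "length p - 1 \<le> c (hd p)" for p
    using colour_less_path that by fastforce
  assume "c ui \<noteq> c uk"
  have "c uj = 4" using four by (simp add: defs j_def)
  have "c ui \<in> {2..4}" "c uk \<in> {2..4}"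
    using colour_Orig_range[OF i] colour_Orig_range[OF k] K by (auto simp: defs)
  moreover have "c ui \<noteq> c uj" "c uk \<noteq> c uj"
    using apart[of "[ui, a, uj]"] apart[of "[uk, b, uj]"] adj \<open>i \<noteq> j\<close> \<open>j \<noteq> k\<close>
      \<open>c ui \<in> {2..4}\<close> \<open>c uk \<in> {2..4}\<close> by (auto simp: defs)
  ultimately have ui_uk: "c ui \<in> {2, 3}" "c uk \<in> {2, 3}" using \<open>c uj = 4\<close> by auto
  have "c vj = 1"
  proof (rule ccontr)
    assume "c vj \<noteq> 1"
    then have "2 \<le> c vj" using colour_range[OF verts(3)] by auto
    then have "c vj \<noteq> c ui" "c vj \<noteq> c uk" "c vj \<noteq> 4"
      using apart[of "[vj, s, ui]"] apart[of "[vj, t, uk]"] apart[of "[vj, t, uk, b, uj]"] adj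
        \<open>c uj = 4\<close> by (auto simp: defs)
    then show False
      using colour_range[OF verts(3)] K \<open>2 \<le> c vj\<close> ui_uk \<open>c ui \<noteq> c uk\<close> by auto
  qed
  then have "c s \<noteq> 1" "c t \<noteq> 1"
    using apart[of "[vj, s]"] apart[of "[vj, t]"] adj by (auto simp: defs)
  then have "c s \<in> {2..4}" "c t \<in> {2..4}"
    using colour_range[OF verts(4)] colour_range[OF verts(5)] K by auto
  then have "c s \<noteq> 4" "c t \<noteq> 4" "c s \<noteq> c t" "c s \<noteq> c ui" "c t \<noteq> c uk"
    using apart[of "[s, ui, a, uj]"] apart[of "[t, uk, b, uj]"] apart[of "[s, vj, t]"]
      apart[of "[s, ui]"] apart[of "[t, uk]"] adj \<open>i \<noteq> k\<close> \<open>c uj = 4\<close>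
    by (auto simp: defs doubleton_eq_iff)
  moreover have "c s = c uk \<Longrightarrow> c s < 3" "c t = c ui \<Longrightarrow> c t < 3"
    using colour_less_path[of "[s, vj, t, uk]"] colour_less_path[of "[t, vj, s, ui]"] adj
    by (auto simp: defs doubleton_eq_iff)
  ultimately show False
    using \<open>c s \<in> {2..4}\<close> \<open>c t \<in> {2..4}\<close> ui_uk \<open>c ui \<noteq> c uk\<close> by auto
qed

lemma three_le_colours: "3 \<le> K"
  using colour_Orig_range[of 0] colour_Orig_range[of "Suc 0 mod n"] colour_Orig_Suc_neq[of 0] n
  by fastforce

lemma even_if_at_most_4_colours: "even n"
proof (rule even_if_cyclic_colours_2_3_4[where f = "\<lambda>i. c (Orig (i, False))"])
  show "0 < n" using n by simp
  show "c (Orig (i, False)) \<in> {2..4}" if "i < n" for i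
    using colour_Orig_range[OF that] K by simp
qed (fact colour_Orig_Suc_neq colour_Orig_neighbours_of_4)+

end

theorem proposition8:
  fixes n m :: nat
  assumes "n \<ge> 3" and "m \<ge> 1"
  shows "packing_chromatic (fssd m (splitting_graph (cycle_graph n))) =
           (if even n then 3 else 5)"
  unfolding packing_chromatic_def
proof (rule Least_equality)
  show "\<exists>c. packing_colouring (fssd m (splitting_graph (cycle_graph n))) (if even n then 3 else 5) c"
    using packing_colouring_splitting_cycle by blast
next
  fix K assume "\<exists>c. packing_colouring (fssd m (splitting_graph (cycle_graph n))) K c"
  then obtain c where c: "packing_colouring (fssd m (splitting_graph (cycle_graph n))) K c" ..
  show "(if even n then 3 else 5) \<le> K"
  proof (cases "K \<le> 4")
    case True
    then show ?thesis
      using three_le_colours[OF assms c True] even_if_at_most_4_colours[OF assms c True] by simp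
  qed simp
qed

end
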